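(* Consider {\L}ukasiewicz real-valued logic, in which the disjunction $\lor$ has $f_\lor(a,b)=\min\{1,a+b\}$, and let $A_1,A_2$ be distinct atomic propositions. There is no finite Boolean combination (built with classical $\land,\lor,\neg$ over sentences) of sentences of the form $(A_1,S)$ or $(A_2,S)$, with $S\subseteq[0,1]$ arbitrary, that is equivalent to the sentence $(A_1\lor A_2,\{0.5\})$ (i.e., has exactly the same models).
   Context: Setting (real-valued logic). Fix a finite set of atomic propositions, a finite set of binary connectives and a finite set of unary connectives. Each binary connective $\alpha$ comes with a function $f_\alpha:[0,1]^2\to[0,1]$ and each unary connective $\rho$ with a function $f_\rho:[0,1]\to[0,1]$. Formulas are built recursively from atomic propositions using the connectives. A model $M$ assigns a value in $[0,1]$ to each atomic proposition; the value of a compound formula is computed recursively via $f_\alpha$, $f_\rho$. A sentence is $(\sigma_1,\ldots,\sigma_k,S)$ with pairwise distinct formulas $\sigma_i$ and $S\subseteq[0,1]^k$; $M$ satisfies it if the tuple of values of $\sigma_1,\ldots,\sigma_k$ in $M$ lies in $S$. A Boolean combination of sentences is satisfied by $M$ according to the classical truth-table reading of $\land,\lor,\neg$ applied to the satisfaction of its constituent sentences. *)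

theory Defs
  imports Complex_Main
begin

datatype ('a, 'b, 'u) form =
    Atom 'a
  | Bin 'b "('a, 'b, 'u) form" "('a, 'b, 'u) form"
  | Unary 'u "('a, 'b, 'u) form"

fun fval :: "('b \<Rightarrow> real \<Rightarrow> real \<Rightarrow> real) \<Rightarrow> ('u \<Rightarrow> real \<Rightarrow> real)
              \<Rightarrow> ('a \<Rightarrow> real) \<Rightarrow> ('a, 'b, 'u) form \<Rightarrow> real" where
  "fval fb fu M (Atom a) = M a"
| "fval fb fu M (Bin b \<phi> \<psi>) = fb b (fval fb fu M \<phi>) (fval fb fu M \<psi>)"
| "fval fb fu M (Unary u \<phi>) = fu u (fval fb fu M \<phi>)"

definition is_model :: "('a \<Rightarrow> real) \<Rightarrow> bool" where
  "is_model M \<longleftrightarrow> (\<forall>a. M a \<in> {0..1})"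

text \<open>A sentence (sigma_1,...,sigma_k, S): a list of formulas and a set of k-tuples (lists).\<close>
type_synonym ('a, 'b, 'u) sentence = "('a, 'b, 'u) form list \<times> real list set"

definition wf_sentence :: "('a, 'b, 'u) sentence \<Rightarrow> bool" where
  "wf_sentence s \<longleftrightarrow> distinct (fst s) \<and>
     snd s \<subseteq> {xs. length xs = length (fst s) \<and> set xs \<subseteq> {0..1}}"

definition sat_sentence :: "('b \<Rightarrow> real \<Rightarrow> real \<Rightarrow> real) \<Rightarrow> ('u \<Rightarrow> real \<Rightarrow> real)
     \<Rightarrow> ('a \<Rightarrow> real) \<Rightarrow> ('a, 'b, 'u) sentence \<Rightarrow> bool" where
  "sat_sentence fb fu M s \<longleftrightarrow> map (fval fb fu M) (fst s) \<in> snd s"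

datatype 's bcomb = BSent 's | BAnd "'s bcomb" "'s bcomb" | BOr "'s bcomb" "'s bcomb" | BNot "'s bcomb"

fun bsents :: "'s bcomb \<Rightarrow> 's set" where
  "bsents (BSent s) = {s}"
| "bsents (BAnd p q) = bsents p \<union> bsents q"
| "bsents (BOr p q) = bsents p \<union> bsents q"
| "bsents (BNot p) = bsents p"

fun bsat :: "('s \<Rightarrow> bool) \<Rightarrow> 's bcomb \<Rightarrow> bool" where
  "bsat I (BSent s) = I s"
| "bsat I (BAnd p q) = (bsat I p \<and> bsat I q)"
| "bsat I (BOr p q) = (bsat I p \<or> bsat I q)"
| "bsat I (BNot p) = (\<not> bsat I p)"

end

theory Submission
  imports Defs
begin

text \<open>A Boolean combination of sentences about the single atoms A1, A2 only sees through
  which of finitely many sets S the value of A1 falls. Since [0, 1/2] is infinite, two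
  distinct values x, x' of A1 lie in exactly the same of these sets; the models
  A1 = x, A2 = 1/2 - x and A1 = x', A2 = 1/2 - x then satisfy the same combination,
  although only the first gives A1 \<or> A2 the value 1/2.\<close>

lemma finite_bsents: "finite (bsents P)"
  by (induction P) auto

lemma bsat_cong: "(\<And>s. s \<in> bsents P \<Longrightarrow> I s = J s) \<Longrightarrow> bsat I P = bsat J P"
  by (induction P) auto

lemma sat_sentence_Atom: "sat_sentence fb fu M ([Atom a], S) \<longleftrightarrow> [M a] \<in> S"
  by (simp add: sat_sentence_def)

lemma bsat_atomic_sentences_cong:
  assumes atomic: "\<And>s. s \<in> bsents \<Phi> \<Longrightarrow> \<exists>a S. s = ([Atom a], S)"
    and agree: "\<And>a S. ([Atom a], S) \<in> bsents \<Phi> \<Longrightarrow> [M a] \<in> S \<longleftrightarrow> [M' a] \<in> S"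
  shows "bsat (sat_sentence fb fu M) \<Phi> = bsat (sat_sentence fb fu M') \<Phi>"
proof (rule bsat_cong)
  fix s assume s: "s \<in> bsents \<Phi>"
  then obtain a S where "s = ([Atom a], S)"
    using atomic by blast
  with s show "sat_sentence fb fu M s = sat_sentence fb fu M' s"
    using agree by (simp add: sat_sentence_Atom)
qed

lemma infinite_not_separated_by_finite_family:
  assumes "finite F" and "infinite A"
  obtains x y where "x \<in> A" "y \<in> A" "x \<noteq> y" "\<forall>S\<in>F. x \<in> S \<longleftrightarrow> y \<in> S"
proof -
  let ?cell = "\<lambda>x. {S\<in>F. x \<in> S}"
  have "?cell ` A \<subseteq> Pow F"
    by blast
  then have "finite (?cell ` A)"
    using \<open>finite F\<close> by (simp add: finite_subset)
  then have "\<not> inj_on ?cell A"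
    using \<open>infinite A\<close> finite_imageD by blast
  then obtain x y where "x \<in> A" "y \<in> A" "x \<noteq> y" "?cell x = ?cell y"
    unfolding inj_on_def by blast
  then show thesis
    using that by blast
qed

theorem theorem1:
  fixes fb :: "'b::finite \<Rightarrow> real \<Rightarrow> real \<Rightarrow> real"
    and fu :: "'u::finite \<Rightarrow> real \<Rightarrow> real"
    and A1 A2 :: "'a::finite"
    and disj :: 'b
  assumes fb_range: "\<And>b x y. x \<in> {0..1} \<Longrightarrow> y \<in> {0..1} \<Longrightarrow> fb b x y \<in> {0..1}"
    and fu_range: "\<And>u x. x \<in> {0..1} \<Longrightarrow> fu u x \<in> {0..1}"
    and luk_disj: "\<And>x y. fb disj x y = min 1 (x + y)"
    and distinct_atoms: "A1 \<noteq> A2"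
  shows "\<not> (\<exists>\<Phi> :: ('a, 'b, 'u) sentence bcomb.
            (\<forall>s \<in> bsents \<Phi>. wf_sentence s \<and>
                (\<exists>S. s = ([Atom A1], S) \<or> s = ([Atom A2], S))) \<and>
            (\<forall>M. is_model M \<longrightarrow>
                (bsat (sat_sentence fb fu M) \<Phi> \<longleftrightarrow>
                 sat_sentence fb fu M ([Bin disj (Atom A1) (Atom A2)], {[1/2]}))))"
proof
  let ?half = "([Bin disj (Atom A1) (Atom A2)], {[1/2]}) :: ('a, 'b, 'u) sentence"
  assume "\<exists>\<Phi> :: ('a, 'b, 'u) sentence bcomb.
            (\<forall>s \<in> bsents \<Phi>. wf_sentence s \<and> (\<exists>S. s = ([Atom A1], S) \<or> s = ([Atom A2], S))) \<and>
            (\<forall>M. is_model M \<longrightarrow> (bsat (sat_sentence fb fu M) \<Phi> \<longleftrightarrow> sat_sentence fb fu M ?half))"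
  then obtain \<Phi> :: "('a, 'b, 'u) sentence bcomb" where
    shape: "\<And>s. s \<in> bsents \<Phi> \<Longrightarrow> \<exists>S. s = ([Atom A1], S) \<or> s = ([Atom A2], S)" and
    equiv: "\<And>M. is_model M \<Longrightarrow> bsat (sat_sentence fb fu M) \<Phi> \<longleftrightarrow> sat_sentence fb fu M ?half"
    by blast
  obtain x x' :: real where x: "x \<in> {0..1/2}" "x' \<in> {0..1/2}" "x \<noteq> x'"
    and same_cells: "\<forall>S \<in> (\<lambda>s. {t. [t] \<in> snd s}) ` bsents \<Phi>. x \<in> S \<longleftrightarrow> x' \<in> S"
  proof (rule infinite_not_separated_by_finite_family)
    show "finite ((\<lambda>s. {t. [t] \<in> snd s}) ` bsents \<Phi>)"
      by (intro finite_imageI finite_bsents)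
    show "infinite {0..1/2::real}"
      by (rule infinite_Icc) simp
  qed
  define M where "M = (\<lambda>a. if a = A1 then x else if a = A2 then 1/2 - x else 0)"
  define M' where "M' = (\<lambda>a. if a = A1 then x' else if a = A2 then 1/2 - x else 0)"
  have models: "is_model M" "is_model M'"
    unfolding is_model_def M_def M'_def using x by auto
  have "bsat (sat_sentence fb fu M) \<Phi> = bsat (sat_sentence fb fu M') \<Phi>"
    using shape same_cells distinct_atoms unfolding M_def M'_def
    by (intro bsat_atomic_sentences_cong) fastforce+
  moreover have "sat_sentence fb fu M ?half"
    unfolding sat_sentence_def M_def using distinct_atoms by (simp add: luk_disj)
  moreover have "\<not> sat_sentence fb fu M' ?half"
    unfolding sat_sentence_def M'_def using distinct_atoms x by (auto simp: luk_disj min_def)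
  ultimately show False
    using equiv models by blast
qed

end
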